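(* Let $G$ be a minimal BTB graph and $1\le r<d\le |W|-|B|-1$. Then every TCD map $T$ on $G$ of rank $r$ into $\mathbb{CP}^r$ is, up to a projective transformation of $\mathbb{CP}^r$, the central projection $\pi_U\circ\hat T$ of a TCD map $\hat T$ on $G$ of rank $d$ into $\mathbb{CP}^d$, from some $\hat T$-admissible subspace $U\subset\mathbb{CP}^d$ of dimension $d-r-1$.
   Context: A BTB graph is a finite planar bipartite graph (black $B$, white $W$) in a closed disk or cactus, with boundary white vertices on the boundary and every black vertex of degree $3$. It is minimal if zig-zag paths (turning maximally left at white and right at black vertices) are never closed, never traverse an edge twice, and no two both traverse two distinct edges $e_1$ then $e_2$. A TCD map is $T:W\to\mathbb{CP}^d$ such that for each black vertex $b$ the images of its three white neighbours are pairwise distinct and lie on a line $L_b$. Its rank is the dimension of the span of its image. For a projective subspace $U\subset\mathbb{CP}^d$ of dimension $d-r-1$ and a complementary subspace $V$ of dimension $r$, the central projection $\pi_U:\mathbb{CP}^d\dashrightarrow V\cong\mathbb{CP}^r$ sends $P\notin U$ to $V\cap\mathrm{span}(U,P)$. $U$ is $\hat T$-admissible if no $\hat T(w)$ lies in $U$ and $U\cap L_b=\emptyset$ for every black vertex $b$; then $\pi_U\circ\hat T$ is a TCD map. *)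

theory Defs
  imports Complex_Main
begin

text \<open>We add one extra vertex inf ("the boundary") and, for every time a boundary
  white vertex touches the boundary, a stub edge from it to inf.  The resulting
  graph G' is a combinatorial map on the sphere (darts, edge involution alph,
  vertex rotation sig); cutting out a small disk around inf recovers G in a
  disk (one stub per boundary vertex) or a cactus (several stubs at pinch
  points).\<close>

record ('v, 'd) btb =
  Bv    :: "'v set"
  Wv    :: "'v set"
  infv  :: "'v"
  darts :: "'d set"
  vtx   :: "'d \<Rightarrow> 'v"
  alph  :: "'d \<Rightarrow> 'd"
  sig   :: "'d \<Rightarrow> 'd"

definition dart_conn :: "('v,'d) btb \<Rightarrow> ('d \<times> 'd) set" where
  "dart_conn G = {(d, sig G d) | d. d \<in> darts G} \<union> {(d, alph G d) | d. d \<in> darts G}"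

definition face_perm :: "('v,'d) btb \<Rightarrow> 'd \<Rightarrow> 'd" where
  "face_perm G = sig G \<circ> alph G"

definition faces :: "('v,'d) btb \<Rightarrow> 'd set set" where
  "faces G = (\<lambda>d. {(face_perm G ^^ n) d | n. True}) ` darts G"

definition btb_graph :: "('v,'d) btb \<Rightarrow> bool" where
  "btb_graph G \<longleftrightarrow>
     finite (darts G) \<and> finite (Bv G) \<and> finite (Wv G) \<and>
     Bv G \<inter> Wv G = {} \<and> infv G \<notin> Bv G \<union> Wv G \<and>
     (\<forall>d\<in>darts G. alph G d \<in> darts G \<and> alph G d \<noteq> d \<and> alph G (alph G d) = d) \<and>
     bij_betw (sig G) (darts G) (darts G) \<and>
     (\<forall>d\<in>darts G. vtx G (sig G d) = vtx G d) \<and>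
     (\<forall>d1\<in>darts G. \<forall>d2\<in>darts G. vtx G d1 = vtx G d2 \<longrightarrow> (\<exists>n. (sig G ^^ n) d1 = d2)) \<and>
     vtx G ` darts G \<subseteq> Bv G \<union> Wv G \<union> {infv G} \<and>
     infv G \<in> vtx G ` darts G \<and>
     (\<forall>d\<in>darts G. vtx G d \<in> Bv G \<longrightarrow> vtx G (alph G d) \<in> Wv G) \<and>
     (\<forall>d\<in>darts G. vtx G d \<in> Wv G \<longrightarrow> vtx G (alph G d) \<in> Bv G \<union> {infv G}) \<and>
     (\<forall>d\<in>darts G. vtx G d = infv G \<longrightarrow> vtx G (alph G d) \<in> Wv G) \<and>
     (\<forall>b\<in>Bv G. card {d \<in> darts G. vtx G d = b} = 3) \<and>
     (\<forall>d1\<in>darts G. \<forall>d2\<in>darts G. (d1, d2) \<in> (dart_conn G)\<^sup>*) \<and>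
     int (card (vtx G ` darts G)) - int (card (darts G) div 2) + int (card (faces G)) = 2"

text \<open>Oriented edges are darts: dart d is traversed from vtx d to vtx (alph d).
  Zig-zag step: turn maximally left (inverse rotation) at white, maximally
  right (rotation) at black vertices.\<close>

definition zz :: "('v,'d) btb \<Rightarrow> 'd \<Rightarrow> 'd" where
  "zz G d = (let a = alph G d in
     if vtx G a \<in> Wv G then inv_into (darts G) (sig G) a else sig G a)"

definition hits_bd :: "('v,'d) btb \<Rightarrow> 'd \<Rightarrow> bool" where
  "hits_bd G d \<longleftrightarrow> vtx G (alph G d) = infv G"

definition edge_dart :: "('v,'d) btb \<Rightarrow> 'd \<Rightarrow> bool" where
  "edge_dart G d \<longleftrightarrow> d \<in> darts G \<and> vtx G d \<noteq> infv G \<and> vtx G (alph G d) \<noteq> infv G"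

definition reach_before :: "('v,'d) btb \<Rightarrow> 'd \<Rightarrow> 'd \<Rightarrow> bool" where
  "reach_before G d d' \<longleftrightarrow>
     (\<exists>n. (zz G ^^ n) d = d' \<and> (\<forall>m<n. \<not> hits_bd G ((zz G ^^ m) d)))"

definition minimal_btb :: "('v,'d) btb \<Rightarrow> bool" where
  "minimal_btb G \<longleftrightarrow>
     \<comment> \<open>no closed zig-zag paths\<close>
     (\<forall>d\<in>darts G. \<exists>n. hits_bd G ((zz G ^^ n) d)) \<and>
     \<comment> \<open>no zig-zag path traverses an edge twice\<close>
     (\<forall>d. edge_dart G d \<longrightarrow> \<not> reach_before G d (alph G d)) \<and>
     \<comment> \<open>no two distinct zig-zag paths both traverse e1 then e2 (e1 \<noteq> e2)\<close>
     \<not> (\<exists>d1 d2. edge_dart G d1 \<and> edge_dart G d2 \<and>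
           d2 \<noteq> d1 \<and> d2 \<noteq> alph G d1 \<and>
           \<not> reach_before G d1 (alph G d1) \<and> \<not> reach_before G (alph G d1) d1 \<and>
           reach_before G d1 d2 \<and> reach_before G (alph G d1) (alph G d2))"

text \<open>C^n as functions nat => complex vanishing from index n on; a point of CP^n
  is represented by a nonzero vector of C^(n+1).\<close>

definition cvec :: "nat \<Rightarrow> (nat \<Rightarrow> complex) set" where
  "cvec n = {v. \<forall>i\<ge>n. v i = 0}"

definition proj_eq :: "(nat \<Rightarrow> complex) \<Rightarrow> (nat \<Rightarrow> complex) \<Rightarrow> bool" where
  "proj_eq x y \<longleftrightarrow> (\<exists>c. c \<noteq> 0 \<and> y = (\<lambda>i. c * x i))"

definition cspan :: "(nat \<Rightarrow> complex) set \<Rightarrow> (nat \<Rightarrow> complex) set" where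
  "cspan S = {v. \<exists>F c. finite F \<and> F \<subseteq> S \<and> v = (\<lambda>i. \<Sum>u\<in>F. c u * u i)}"

definition cindep :: "(nat \<Rightarrow> complex) set \<Rightarrow> bool" where
  "cindep F \<longleftrightarrow> (\<forall>c. (\<forall>i. (\<Sum>u\<in>F. c u * u i) = 0) \<longrightarrow> (\<forall>u\<in>F. c u = 0))"

definition cdim :: "(nat \<Rightarrow> complex) set \<Rightarrow> nat" where
  "cdim S = Max {card F | F. F \<subseteq> S \<and> finite F \<and> cindep F}"

text \<open>X is a linear subspace of C^n of (linear) dimension k, i.e. a projective
  subspace of CP^(n-1) of dimension k-1.\<close>
definition csubspace :: "nat \<Rightarrow> nat \<Rightarrow> (nat \<Rightarrow> complex) set \<Rightarrow> bool" where
  "csubspace n k X \<longleftrightarrow>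
     (\<exists>F. F \<subseteq> cvec n \<and> finite F \<and> card F = k \<and> cindep F \<and> X = cspan F)"

definition clinear_on :: "(nat \<Rightarrow> complex) set \<Rightarrow> ((nat \<Rightarrow> complex) \<Rightarrow> (nat \<Rightarrow> complex)) \<Rightarrow> bool" where
  "clinear_on V f \<longleftrightarrow>
     (\<forall>x\<in>V. \<forall>y\<in>V. f (\<lambda>i. x i + y i) = (\<lambda>i. f x i + f y i)) \<and>
     (\<forall>x\<in>V. \<forall>c. f (\<lambda>i. c * x i) = (\<lambda>i. c * f x i))"

definition nbrs :: "('v,'d) btb \<Rightarrow> 'v \<Rightarrow> 'v set" where
  "nbrs G b = {vtx G (alph G d) | d. d \<in> darts G \<and> vtx G d = b}"

definition tcd_map :: "('v,'d) btb \<Rightarrow> nat \<Rightarrow> ('v \<Rightarrow> nat \<Rightarrow> complex) \<Rightarrow> bool" where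
  "tcd_map G n T \<longleftrightarrow>
     (\<forall>w\<in>Wv G. T w \<in> cvec (n + 1) \<and> T w \<noteq> (\<lambda>i. 0)) \<and>
     (\<forall>b\<in>Bv G. \<forall>d1\<in>darts G. \<forall>d2\<in>darts G.
         vtx G d1 = b \<longrightarrow> vtx G d2 = b \<longrightarrow> d1 \<noteq> d2 \<longrightarrow>
         \<not> proj_eq (T (vtx G (alph G d1))) (T (vtx G (alph G d2)))) \<and>
     (\<forall>b\<in>Bv G. cdim (T ` nbrs G b) \<le> 2)"

text \<open>Rank = projective dimension of the span of the image.\<close>
definition tcd_rank :: "('v,'d) btb \<Rightarrow> ('v \<Rightarrow> nat \<Rightarrow> complex) \<Rightarrow> nat" where
  "tcd_rank G T = cdim (T ` Wv G) - 1"

text \<open>Admissibility of the projective subspace with linear cone U; the line L_b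
  is the span of the images of the white neighbours of b.\<close>
definition admissible :: "('v,'d) btb \<Rightarrow> ('v \<Rightarrow> nat \<Rightarrow> complex) \<Rightarrow> (nat \<Rightarrow> complex) set \<Rightarrow> bool" where
  "admissible G T U \<longleftrightarrow>
     (\<forall>w\<in>Wv G. T w \<notin> U) \<and>
     (\<forall>b\<in>Bv G. U \<inter> cspan (T ` nbrs G b) = {\<lambda>i. 0})"

end

theory Submission
  imports Defs "HOL-Library.Function_Algebras"
begin

(* Let Phi c = sum_w c_w T(w) for c in C^W; it maps onto C^(r+1).  At a black vertex the three
   images T(w) are pairwise distinct and collinear, so their linear relations form a line spanned
   by a relation without zero coefficients.  These at most |B| relations span a subspace R of
   ker Phi, and since |W| >= |B| + d + 1 there is a linear map Y from C^W to the coordinates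
   r+1..d that kills R and for which Phi + Y maps onto C^(d+1).  Then That(w) = T(w) + Y(e_w) is a
   TCD map of rank d: every relation of T at a black vertex is one of That, so the black lines
   survive, and dropping the coordinates r+1..d, i.e. projecting from U = span(e_(r+1),...,e_d)
   onto V = C^(r+1), recovers T. *)

section \<open>Vectors with complex coordinates\<close>

definition cscale :: "complex \<Rightarrow> ('a \<Rightarrow> complex) \<Rightarrow> 'a \<Rightarrow> complex" where
  "cscale c x = (\<lambda>i. c * x i)"

interpretation CV: vector_space cscale
  by unfold_locales (auto simp: cscale_def fun_eq_iff algebra_simps)

interpretation CVP: vector_space_pair "cscale :: complex \<Rightarrow> ('a \<Rightarrow> complex) \<Rightarrow> _"
  "cscale :: complex \<Rightarrow> ('b \<Rightarrow> complex) \<Rightarrow> _" ..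

lemma cscale_apply [simp]: "cscale c x i = c * x i"
  by (simp add: cscale_def)

lemma sum_apply: "(\<Sum>x\<in>A. f x) i = (\<Sum>x\<in>A. f x i)"
  by (induct A rule: infinite_finite_induct) auto

lemma sum_cscale_eq: "(\<Sum>u\<in>F. cscale (c u) u) = (\<lambda>i. \<Sum>u\<in>F. c u * u i)"
  by (simp add: fun_eq_iff sum_apply)

lemma cspan_eq_span: "cspan S = CV.span S"
  unfolding cspan_def CV.span_explicit sum_cscale_eq by blast

lemma cindep_iff_independent:
  assumes "finite F"
  shows "cindep F \<longleftrightarrow> CV.independent F"
proof
  assume "cindep F"
  then show "CV.independent F"
    by (intro CV.independent_if_scalars_zero[OF assms])
      (auto simp: cindep_def sum_cscale_eq fun_eq_iff)
next
  assume indep: "CV.independent F"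
  show "cindep F"
    unfolding cindep_def
  proof (intro allI impI)
    fix c assume "\<forall>i. (\<Sum>u\<in>F. c u * u i) = 0"
    then have "(\<Sum>u\<in>F. cscale (c u) u) = 0"
      by (simp add: sum_cscale_eq fun_eq_iff)
    then show "\<forall>u\<in>F. c u = 0"
      using indep assms unfolding CV.dependent_explicit by blast
  qed
qed

lemma proj_eq_refl: "proj_eq x x"
  unfolding proj_eq_def by (rule exI[of _ 1]) simp

lemma scalars_zero_if_not_proj_eq:
  assumes "u \<noteq> 0" "v \<noteq> 0" "\<not> proj_eq u v" and rel: "cscale a u + cscale b v = 0"
  shows "a = 0 \<and> b = 0"
proof (cases "b = 0")
  case True
  then show ?thesis using rel assms(1) by simp
next
  case False
  have v: "v = (\<lambda>i. (- a / b) * u i)"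
  proof
    fix i
    have "a * u i + b * v i = 0" using fun_cong[OF rel, of i] by simp
    then show "v i = (- a / b) * u i" using False by (simp add: field_simps add_eq_0_iff)
  qed
  then have "a \<noteq> 0" using assms(2) by (auto simp: fun_eq_iff)
  then have "proj_eq u v" unfolding proj_eq_def using False v by (intro exI[of _ "- a / b"]) auto
  with assms(3) show ?thesis by contradiction
qed

definition supp_on :: "'a set \<Rightarrow> ('a \<Rightarrow> complex) set" where
  "supp_on A = {x. \<forall>i. i \<notin> A \<longrightarrow> x i = 0}"

definition unit_vec :: "'a \<Rightarrow> 'a \<Rightarrow> complex" where
  "unit_vec i = (\<lambda>j. if j = i then 1 else 0)"

lemma cvec_eq_supp_on: "cvec n = supp_on {..<n}"
  by (auto simp: cvec_def supp_on_def)

lemma supp_on_Int: "supp_on A \<inter> supp_on B = supp_on (A \<inter> B)"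
  by (auto simp: supp_on_def)

lemma supp_on_empty: "supp_on {} = {0}"
  by (auto simp: supp_on_def fun_eq_iff)

lemma subspace_supp_on: "CV.subspace (supp_on A)"
  by (auto simp: CV.subspace_def supp_on_def)

lemma unit_vec_in_supp_on: "i \<in> A \<Longrightarrow> unit_vec i \<in> supp_on A"
  by (simp add: supp_on_def unit_vec_def)

lemma inj_unit_vec: "inj unit_vec"
  by (rule injI) (metis unit_vec_def one_neq_zero)

lemma card_image_unit_vec: "card (unit_vec ` A) = card A"
  by (rule card_image[OF inj_on_subset[OF inj_unit_vec]]) simp

lemma span_unit_vec_subset: "CV.span (unit_vec ` A) \<subseteq> supp_on A"
  by (rule CV.span_minimal[OF _ subspace_supp_on]) (auto intro: unit_vec_in_supp_on)

lemma independent_unit_vec: "CV.independent (unit_vec ` A)"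
proof
  assume "CV.dependent (unit_vec ` A)"
  then obtain a where a: "a \<in> A" "unit_vec a \<in> CV.span (unit_vec ` A - {unit_vec a})"
    unfolding CV.dependent_def by auto
  have "unit_vec ` A - {unit_vec a} = unit_vec ` (A - {a})"
    by (auto dest: injD[OF inj_unit_vec])
  then have "unit_vec a \<in> CV.span (unit_vec ` (A - {a}))"
    using a(2) by simp
  then have "unit_vec a \<in> supp_on (A - {a})"
    by (rule subsetD[OF span_unit_vec_subset])
  then have "unit_vec a a = 0" by (simp add: supp_on_def)
  then show False by (simp add: unit_vec_def)
qed

definition lincomb :: "'v set \<Rightarrow> ('v \<Rightarrow> 'a \<Rightarrow> complex) \<Rightarrow> ('v \<Rightarrow> complex) \<Rightarrow> 'a \<Rightarrow> complex" where
  "lincomb A F c = (\<Sum>w\<in>A. cscale (c w) (F w))"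

lemma linear_lincomb: "Vector_Spaces.linear cscale cscale (lincomb A F)"
  unfolding lincomb_def Vector_Spaces.linear_iff
  by (auto simp: CV.vector_space_axioms fun_eq_iff sum_apply sum.distrib sum_distrib_left
      algebra_simps)

lemma lincomb_in_span: "lincomb A F c \<in> CV.span (F ` A)"
  unfolding lincomb_def by (intro CV.span_sum CV.span_scale CV.span_base) auto

lemma lincomb_cong: "(\<And>w. w \<in> A \<Longrightarrow> F w = F' w) \<Longrightarrow> lincomb A F c = lincomb A F' c"
  unfolding lincomb_def by (rule sum.cong) simp_all

lemma lincomb_unit_vec:
  assumes "finite A" "w \<in> A"
  shows "lincomb A F (unit_vec w) = F w"
proof -
  have "lincomb A F (unit_vec w) = (\<Sum>v\<in>A. if v = w then F v else 0)"
    unfolding lincomb_def by (intro sum.cong) (auto simp: unit_vec_def fun_eq_iff)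
  then show ?thesis using assms by (simp add: sum.delta')
qed

lemma lincomb_unit_vecs:
  assumes "finite A" "x \<in> supp_on A"
  shows "lincomb A unit_vec x = x"
proof
  fix j
  have "lincomb A unit_vec x j = (\<Sum>i\<in>A. if i = j then x i else 0)"
    unfolding lincomb_def sum_apply by (intro sum.cong) (auto simp: unit_vec_def)
  then show "lincomb A unit_vec x j = x j"
    using assms by (simp add: sum.delta supp_on_def)
qed

lemma lincomb_supp_subset:
  assumes "finite B" "A \<subseteq> B" "c \<in> supp_on A"
  shows "lincomb B F c = lincomb A F c"
  unfolding lincomb_def
  by (rule sum.mono_neutral_right) (use assms in \<open>auto simp: supp_on_def fun_eq_iff\<close>)

lemma lincomb_add_linear_unit_vec:
  assumes "finite A" "Vector_Spaces.linear cscale cscale Y" "c \<in> supp_on A"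
  shows "lincomb A (\<lambda>w. F w + Y (unit_vec w)) c = lincomb A F c + Y c"
proof -
  have "lincomb A (\<lambda>w. Y (unit_vec w)) c = Y (lincomb A unit_vec c)"
    unfolding lincomb_def by (simp add: CVP.linear_sum[OF assms(2)] CVP.linear_scale[OF assms(2)])
  also have "\<dots> = Y c" using lincomb_unit_vecs[OF assms(1,3)] by simp
  finally show ?thesis by (simp add: lincomb_def CV.scale_right_distrib sum.distrib)
qed

lemma span_unit_vec:
  assumes "finite A"
  shows "CV.span (unit_vec ` A) = supp_on A"
proof
  show "supp_on A \<subseteq> CV.span (unit_vec ` A)"
  proof
    fix x assume "x \<in> supp_on A"
    then have "x = lincomb A unit_vec x" using lincomb_unit_vecs[OF assms] by simp
    also have "\<dots> \<in> CV.span (unit_vec ` A)" by (rule lincomb_in_span)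
    finally show "x \<in> CV.span (unit_vec ` A)" .
  qed
qed (rule span_unit_vec_subset)

lemma span_image_eq_lincomb:
  assumes "finite A"
  shows "CV.span (F ` A) = lincomb A F ` supp_on A"
proof -
  have "lincomb A F ` unit_vec ` A = F ` A"
    unfolding image_image by (rule image_cong[OF refl]) (rule lincomb_unit_vec[OF assms])
  then show ?thesis
    using CVP.linear_span_image[OF linear_lincomb, of A F "unit_vec ` A"]
    by (simp add: span_unit_vec assms)
qed

lemma independent_cvec_card:
  assumes "CV.independent F" "F \<subseteq> cvec n"
  shows "finite F \<and> card F \<le> n"
  using CV.independent_span_bound[of "unit_vec ` {..<n}" F] assms
  by (simp add: span_unit_vec cvec_eq_supp_on card_image_unit_vec)

lemma cvec_subset_span_independent:
  assumes indep: "CV.independent F" and F: "F \<subseteq> cvec n" "card F = n"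
  shows "cvec n \<subseteq> CV.span F"
proof
  fix x assume x: "x \<in> cvec n"
  show "x \<in> CV.span F"
  proof (rule ccontr)
    assume "x \<notin> CV.span F"
    then have "CV.independent (insert x F)" "x \<notin> F"
      using CV.independent_insertI indep CV.span_base by blast+
    moreover have "finite F" using independent_cvec_card indep F(1) by blast
    ultimately show False
      using independent_cvec_card[of "insert x F" n] x F by simp
  qed
qed

lemma finite_cdim_candidates: "finite S \<Longrightarrow> finite {card F | F. F \<subseteq> S \<and> finite F \<and> cindep F}"
  by (rule finite_subset[of _ "card ` Pow S"]) auto

lemma card_le_cdim:
  assumes "finite S" "F \<subseteq> S" "CV.independent F"
  shows "card F \<le> cdim S"
  unfolding cdim_def using assms finite_subset[OF assms(2,1)]
  by (intro Max_ge[OF finite_cdim_candidates]) (auto simp: cindep_iff_independent)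

lemma obtain_independent_card_cdim:
  assumes "finite S"
  obtains F where "F \<subseteq> S" "CV.independent F" "card F = cdim S"
proof -
  have "cindep {}" by (simp add: cindep_def)
  then have "cdim S \<in> {card F | F. F \<subseteq> S \<and> finite F \<and> cindep F}"
    unfolding cdim_def by (intro Max_in[OF finite_cdim_candidates[OF assms]]) auto
  then show ?thesis using that cindep_iff_independent by auto
qed

lemma cdim_le_card_if_subset_span:
  assumes "finite S" "finite P" "S \<subseteq> CV.span P"
  shows "cdim S \<le> card P"
proof -
  obtain F where "F \<subseteq> S" "CV.independent F" "card F = cdim S"
    using obtain_independent_card_cdim[OF assms(1)] .
  then show ?thesis using CV.independent_span_bound[OF assms(2)] assms(3) by fastforce
qed

lemma cdim_eq_iff_cvec_subset_span:
  assumes S: "finite S" "S \<subseteq> cvec n"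
  shows "cdim S = n \<longleftrightarrow> cvec n \<subseteq> CV.span S"
proof
  assume "cdim S = n"
  moreover obtain F where F: "F \<subseteq> S" "CV.independent F" "card F = cdim S"
    using obtain_independent_card_cdim[OF S(1)] .
  ultimately have "cvec n \<subseteq> CV.span F"
    using cvec_subset_span_independent S(2) by blast
  also have "\<dots> \<subseteq> CV.span S" using F(1) by (rule CV.span_mono)
  finally show "cvec n \<subseteq> CV.span S" .
next
  assume span: "cvec n \<subseteq> CV.span S"
  have "S \<subseteq> CV.span (unit_vec ` {..<n})"
    using S(2) by (simp add: span_unit_vec cvec_eq_supp_on)
  then have upper: "cdim S \<le> n"
    using cdim_le_card_if_subset_span[OF S(1), of "unit_vec ` {..<n}"]
    by (simp add: card_image_unit_vec)
  obtain J where J: "J \<subseteq> S" "CV.independent J" "S \<subseteq> CV.span J"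
    using CV.maximal_independent_subset[of S] by blast
  have "unit_vec ` {..<n} \<subseteq> cvec n"
    by (auto simp: cvec_eq_supp_on intro: unit_vec_in_supp_on)
  also have "\<dots> \<subseteq> CV.span J"
    using span CV.span_minimal[OF J(3) CV.subspace_span] by (rule order_trans)
  finally have "card (unit_vec ` {..<n}) \<le> card J"
    using CV.independent_span_bound[OF finite_subset[OF J(1) S(1)] independent_unit_vec] by blast
  then have "n \<le> card J" by (simp add: card_image_unit_vec)
  also have "card J \<le> cdim S" using card_le_cdim[OF S(1) J(1,2)] .
  finally show "cdim S = n" using upper by simp
qed

lemma csubspace_supp_on:
  assumes "A \<subseteq> {..<n}"
  shows "csubspace n (card A) (supp_on A)"
  unfolding csubspace_def
proof (intro exI[of _ "unit_vec ` A"] conjI)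
  have "finite A" using assms finite_subset by blast
  then show "finite (unit_vec ` A)" "supp_on A = cspan (unit_vec ` A)"
    "cindep (unit_vec ` A)"
    by (simp_all add: span_unit_vec cspan_eq_span cindep_iff_independent independent_unit_vec)
  show "unit_vec ` A \<subseteq> cvec n"
    unfolding cvec_eq_supp_on using assms by (auto intro: unit_vec_in_supp_on)
  show "card (unit_vec ` A) = card A" by (rule card_image_unit_vec)
qed

text \<open>On cvec (d + 1), trunc (r + 1) is the central projection from supp_on {r + 1..d}
  onto cvec (r + 1).\<close>

definition trunc :: "nat \<Rightarrow> (nat \<Rightarrow> complex) \<Rightarrow> nat \<Rightarrow> complex" where
  "trunc m x = (\<lambda>i. if i < m then x i else 0)"

lemma trunc_cvec: "x \<in> cvec m \<Longrightarrow> trunc m x = x"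
  by (auto simp: trunc_def cvec_def fun_eq_iff)

lemma trunc_in_cvec: "trunc m x \<in> cvec m"
  by (simp add: trunc_def cvec_def)

lemma trunc_supp_on_ge: "x \<in> supp_on {m..n} \<Longrightarrow> trunc m x = 0"
  by (auto simp: trunc_def supp_on_def fun_eq_iff)

lemma trunc_add: "trunc m (x + y) = trunc m x + trunc m y"
  by (simp add: trunc_def fun_eq_iff)

lemma trunc_lincomb: "trunc m (lincomb A F c) = lincomb A (\<lambda>w. trunc m (F w)) c"
  by (simp add: trunc_def lincomb_def fun_eq_iff sum_apply)

lemma proj_eq_trunc:
  assumes "proj_eq x y"
  shows "proj_eq (trunc m x) (trunc m y)"
proof -
  obtain c where "c \<noteq> 0" "y = (\<lambda>i. c * x i)" using assms unfolding proj_eq_def by blast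
  then show ?thesis unfolding proj_eq_def trunc_def by (intro exI[of _ c]) auto
qed

lemma diff_trunc_in_supp_on: "x \<in> cvec (n + 1) \<Longrightarrow> x - trunc m x \<in> supp_on {m..n}"
  by (auto simp: trunc_def cvec_def supp_on_def)

lemma cvec_subset_subspace:
  assumes "CV.subspace S" "cvec m \<subseteq> S" "supp_on {m..n} \<subseteq> S"
  shows "cvec (n + 1) \<subseteq> S"
proof
  fix x assume x: "x \<in> cvec (n + 1)"
  have "trunc m x + (x - trunc m x) \<in> S"
    using assms trunc_in_cvec diff_trunc_in_supp_on[OF x] by (blast intro: CV.subspace_add)
  then show "x \<in> S" by simp
qed

section \<open>Linear relations\<close>

definition relations :: "'v set \<Rightarrow> ('v \<Rightarrow> 'a \<Rightarrow> complex) \<Rightarrow> ('v \<Rightarrow> complex) set" where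
  "relations A F = {c \<in> supp_on A. lincomb A F c = 0}"

lemma subspace_relations: "CV.subspace (relations A F)"
proof -
  have "relations A F = supp_on A \<inter> {c. lincomb A F c = 0}"
    by (auto simp: relations_def)
  then show ?thesis
    using CV.subspace_inter[OF subspace_supp_on CVP.linear_subspace_kernel[OF linear_lincomb]]
    by simp
qed

lemma relations_mono:
  assumes "finite B" "A \<subseteq> B"
  shows "relations A F \<subseteq> relations B F"
proof
  fix c assume "c \<in> relations A F"
  then have c: "c \<in> supp_on A" "lincomb A F c = 0" by (simp_all add: relations_def)
  then have "c \<in> supp_on B" using assms(2) by (auto simp: supp_on_def)
  then show "c \<in> relations B F"
    using c lincomb_supp_subset[OF assms c(1), of F] by (simp add: relations_def)
qed

lemma relations_nontrivial:
  assumes "finite A" "inj_on F A" "cdim (F ` A) < card A"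
  obtains c where "c \<in> relations A F" "c \<noteq> 0"
proof -
  have "CV.dependent (F ` A)"
    using card_le_cdim[of "F ` A" "F ` A"] assms by (auto simp: card_image)
  then obtain u where u: "\<exists>v\<in>F ` A. u v \<noteq> 0" "(\<Sum>v\<in>F ` A. cscale (u v) v) = 0"
    using CV.dependent_finite assms(1) by blast
  define c where "c w = (if w \<in> A then u (F w) else 0)" for w
  have "lincomb A F c = (\<Sum>v\<in>F ` A. cscale (u v) v)"
    unfolding lincomb_def c_def using assms(2) by (simp add: sum.reindex)
  then have "c \<in> relations A F" using u(2) by (simp add: relations_def supp_on_def c_def)
  moreover have "c \<noteq> 0" using u(1) by (auto simp: c_def fun_eq_iff)
  ultimately show ?thesis by (rule that)
qed

lemma relations_eq_span_if_nowhere_vanishing: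
  assumes A: "finite A" "w0 \<in> A"
    and vanish: "\<And>c w. c \<in> relations A F \<Longrightarrow> w \<in> A \<Longrightarrow> c w = 0 \<Longrightarrow> c = 0"
    and c: "c \<in> relations A F" "c \<noteq> 0"
  shows "(\<forall>w\<in>A. c w \<noteq> 0) \<and> relations A F = CV.span {c}"
proof (intro conjI)
  show nz: "\<forall>w\<in>A. c w \<noteq> 0" using vanish c by blast
  show "relations A F = CV.span {c}"
  proof
    show "CV.span {c} \<subseteq> relations A F"
      using c(1) by (intro CV.span_minimal[OF _ subspace_relations]) simp
    show "relations A F \<subseteq> CV.span {c}"
    proof
      fix c' assume c': "c' \<in> relations A F"
      define k where "k = c' w0 / c w0"
      have "c' - cscale k c \<in> relations A F"
        using c(1) c' by (intro CV.subspace_diff CV.subspace_scale subspace_relations)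
      moreover have "(c' - cscale k c) w0 = 0" using nz A(2) by (simp add: k_def)
      ultimately have "c' = cscale k c" using vanish A(2) by fastforce
      then show "c' \<in> CV.span {c}" unfolding CV.span_singleton by blast
    qed
  qed
qed

lemma relations_three_eq_span:
  assumes card: "card A = 3" and nz: "\<forall>w\<in>A. F w \<noteq> 0"
    and distinct: "\<forall>u\<in>A. \<forall>v\<in>A. u \<noteq> v \<longrightarrow> \<not> proj_eq (F u) (F v)"
    and cdim: "cdim (F ` A) \<le> 2"
  obtains c where "\<forall>w\<in>A. c w \<noteq> 0" "relations A F = CV.span {c}"
proof -
  have fin: "finite A" using card by (intro card_ge_0_finite) simp
  then have "A \<noteq> {}" using card by auto
  then obtain w0 where w0: "w0 \<in> A" by blast
  have "inj_on F A"
  proof (rule inj_onI)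
    fix u v assume "u \<in> A" "v \<in> A" "F u = F v"
    then show "u = v" using distinct proj_eq_refl[of "F u"] by metis
  qed
  moreover have "cdim (F ` A) < card A" using cdim card by simp
  ultimately obtain c where c: "c \<in> relations A F" "c \<noteq> 0"
    using relations_nontrivial[OF fin] by blast
  have vanish: "c' = 0" if c': "c' \<in> relations A F" "w \<in> A" "c' w = 0" for c' w
  proof -
    have "card (A - {w}) = 2" using card c'(2) by simp
    then obtain u v where uv: "A - {w} = {u, v}" "u \<noteq> v" unfolding card_2_iff by blast
    then have uvA: "u \<in> A" "v \<in> A" by auto
    have supp: "c' \<in> supp_on {u, v}"
      using c' uv(1) by (auto simp: relations_def supp_on_def)
    have "cscale (c' u) (F u) + cscale (c' v) (F v) = lincomb {u, v} F c'"
      using uv(2) by (simp add: lincomb_def)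
    also have "\<dots> = lincomb A F c'"
      using uv(1) supp by (intro lincomb_supp_subset[OF fin, symmetric]) auto
    also have "\<dots> = 0" using c'(1) by (simp add: relations_def)
    finally have "c' u = 0 \<and> c' v = 0"
      using scalars_zero_if_not_proj_eq[of "F u" "F v"] nz distinct uvA uv(2) by blast
    then show "c' = 0"
      using supp by (auto simp: supp_on_def fun_eq_iff)
  qed
  have "(\<forall>w\<in>A. c w \<noteq> 0) \<and> relations A F = CV.span {c}"
    using vanish by (rule relations_eq_span_if_nowhere_vanishing[OF fin w0 _ c])
  then show ?thesis using that by blast
qed

lemma cdim_le_card_if_relation:
  assumes A: "finite A" "w \<in> A" and c: "c \<in> relations A F" "c w \<noteq> 0"
  shows "cdim (F ` A) \<le> card A - 1"
proof -
  let ?L = "lincomb (A - {w}) F c"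
  have "cscale (c w) (F w) + ?L = lincomb A F c"
    unfolding lincomb_def using A by (simp add: sum.remove)
  also have "\<dots> = 0" using c(1) by (simp add: relations_def)
  finally have rel: "cscale (c w) (F w) + ?L = 0" .
  have "F w = cscale (- 1 / c w) ?L"
  proof
    fix i
    have "c w * F w i = - ?L i"
      using fun_cong[OF rel, of i] by (simp add: eq_neg_iff_add_eq_0)
    then show "F w i = cscale (- 1 / c w) ?L i" using c(2) by (simp add: field_simps)
  qed
  then have Fw: "F w \<in> CV.span (F ` (A - {w}))"
    by (metis CV.span_scale lincomb_in_span)
  have "F ` A \<subseteq> CV.span (F ` (A - {w}))"
  proof (rule image_subsetI)
    fix x assume "x \<in> A"
    then show "F x \<in> CV.span (F ` (A - {w}))"
      using Fw by (cases "x = w") (auto intro: CV.span_base)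
  qed
  then have "cdim (F ` A) \<le> card (F ` (A - {w}))"
    using A(1) by (intro cdim_le_card_if_subset_span) auto
  also have "\<dots> \<le> card (A - {w})" using A(1) by (intro card_image_le) simp
  finally show ?thesis using A by simp
qed

section \<open>Complementing a linear map\<close>

lemma exists_spanning_subset_card_le:
  assumes "F ` X \<subseteq> cvec m"
  obtains X0 where "X0 \<subseteq> X" "finite X0" "card X0 \<le> m" "F ` X \<subseteq> CV.span (F ` X0)"
proof -
  obtain I where I: "I \<subseteq> F ` X" "CV.independent I" "F ` X \<subseteq> CV.span I"
    using CV.maximal_independent_subset[of "F ` X"] by blast
  obtain X0 where X0: "X0 \<subseteq> X" "inj_on F X0" "I = F ` X0"
    using I(1) unfolding subset_image_inj by blast
  have "finite I \<and> card I \<le> m" using independent_cvec_card I(1,2) assms by blast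
  then show ?thesis using that[of X0] X0 I(3) by (simp add: card_image finite_image_iff)
qed

lemma card_basis_supp_on:
  assumes W: "finite W" and B: "CV.independent B" "CV.span B = supp_on W"
  shows "finite B \<and> card B = card W"
proof -
  have "B \<subseteq> CV.span (unit_vec ` W)"
    using CV.span_superset[of B] by (simp add: B(2) span_unit_vec[OF W])
  then have fin: "finite B \<and> card B \<le> card W"
    using CV.independent_span_bound[of "unit_vec ` W" B] W B(1) by (simp add: card_image_unit_vec)
  have "unit_vec ` W \<subseteq> CV.span B"
    using B(2) by (auto intro: unit_vec_in_supp_on)
  then have "card W \<le> card B"
    using CV.independent_span_bound[of B "unit_vec ` W"] fin independent_unit_vec[of W]
    by (simp add: card_image_unit_vec)
  then show ?thesis using fin by simp
qed

lemma exists_basis_supp_on_extending: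
  assumes W: "finite W" and R: "R \<subseteq> supp_on W" "finite R"
  obtains BR B where "BR \<subseteq> R" "R \<subseteq> CV.span BR" "card BR \<le> card R" "BR \<subseteq> B"
    "CV.independent B" "CV.span B = supp_on W" "finite B" "card B = card W"
proof -
  obtain BR where BR: "BR \<subseteq> R" "CV.independent BR" "R \<subseteq> CV.span BR"
    using CV.maximal_independent_subset[of R] by blast
  have "BR \<subseteq> supp_on W" using BR(1) R(1) by (rule order_trans)
  then obtain B where B: "BR \<subseteq> B" "B \<subseteq> supp_on W" "CV.independent B" "supp_on W \<subseteq> CV.span B"
    by (rule CV.maximal_independent_subset_extend[OF _ BR(2)])
  have span_B: "CV.span B = supp_on W"
    using CV.span_minimal[OF B(2) subspace_supp_on] B(4) by (rule subset_antisym)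
  show ?thesis
    using that[OF BR(1,3) card_mono[OF R(2) BR(1)] B(1,3) span_B]
      card_basis_supp_on[OF W B(3) span_B] by blast
qed

lemma exists_adapted_basis:
  fixes Phi :: "('v \<Rightarrow> complex) \<Rightarrow> nat \<Rightarrow> complex"
  assumes W: "finite W" and Phi: "Vector_Spaces.linear cscale cscale Phi"
    and Phi_range: "Phi ` supp_on W \<subseteq> cvec m"
    and R: "R \<subseteq> supp_on W" "finite R" "\<forall>c\<in>R. Phi c = 0"
    and Q: "finite Q" "card Q + m + card R \<le> card W"
  obtains B X0 X1 h where "CV.independent B" "CV.span B = supp_on W"
    "X1 \<subseteq> B" "X0 \<subseteq> B - X1" "R \<subseteq> CV.span (B - X1)"
    "Phi ` supp_on W \<subseteq> CV.span (Phi ` X0)" "bij_betw h X1 Q"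
proof -
  obtain BR B where BR: "BR \<subseteq> R" "R \<subseteq> CV.span BR" "card BR \<le> card R" "BR \<subseteq> B"
    and B: "CV.independent B" "CV.span B = supp_on W" "finite B" "card B = card W"
    using exists_basis_supp_on_extending[OF W R(1,2)] .
  have "Phi ` (B - BR) \<subseteq> cvec m" using B(2) CV.span_base Phi_range by blast
  then obtain X0 where X0: "X0 \<subseteq> B - BR" "finite X0" "card X0 \<le> m"
      "Phi ` (B - BR) \<subseteq> CV.span (Phi ` X0)"
    by (rule exists_spanning_subset_card_le)
  have "card (B - BR - X0) = card B - card BR - card X0"
    using card_Diff_subset[OF X0(2,1)] card_Diff_subset[OF finite_subset[OF BR(1) R(2)] BR(4)]
    by simp
  then have "card Q \<le> card (B - BR - X0)" using Q(2) BR(3) B(4) X0(3) by linarith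
  then obtain X1 where X1: "X1 \<subseteq> B - BR - X0" "card X1 = card Q" "finite X1"
    by (rule obtain_subset_with_card_n)
  then obtain h where h: "bij_betw h X1 Q" using finite_same_card_bij Q(1) by metis
  have "Phi ` B \<subseteq> CV.span (Phi ` X0)"
  proof (rule image_subsetI)
    fix z assume z: "z \<in> B"
    show "Phi z \<in> CV.span (Phi ` X0)"
    proof (cases "z \<in> BR")
      case True
      then have "Phi z = 0" using BR(1) R(3) by blast
      then show ?thesis by (simp add: CV.span_zero)
    next
      case False
      then show ?thesis using X0(4) z by blast
    qed
  qed
  then have "Phi ` supp_on W \<subseteq> CV.span (Phi ` X0)"
    unfolding B(2)[symmetric] CVP.linear_span_image[OF Phi, symmetric]
    by (rule CV.span_minimal[OF _ CV.subspace_span])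
  moreover have "R \<subseteq> CV.span (B - X1)"
    using BR(2) CV.span_mono[of BR "B - X1"] BR(4) X1(1) by blast
  moreover have "X1 \<subseteq> B" "X0 \<subseteq> B - X1" using X0(1) X1(1) by auto
  ultimately show ?thesis using that[OF B(1,2) _ _ _ _ h] by blast
qed

lemma exists_linear_unit_vecs_on_basis_part:
  fixes h :: "('v \<Rightarrow> complex) \<Rightarrow> 'a"
  assumes B: "CV.independent B" "X1 \<subseteq> B" and h: "h ` X1 \<subseteq> Q"
  obtains Y where "Vector_Spaces.linear cscale cscale Y" "\<And>c. Y c \<in> supp_on Q"
    "\<And>c. c \<in> CV.span (B - X1) \<Longrightarrow> Y c = 0" "\<And>z. z \<in> X1 \<Longrightarrow> Y z = unit_vec (h z)"
proof -
  define y where "y z = (if z \<in> X1 then unit_vec (h z) else 0)" for z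
  define Y where "Y = CVP.construct B y"
  have lin_Y: "Vector_Spaces.linear cscale cscale Y"
    unfolding Y_def by (rule CVP.linear_construct[OF B(1)])
  have Y_basis: "Y z = y z" if "z \<in> B" for z
    unfolding Y_def by (rule CVP.construct_basis[OF B(1) that])
  have "y ` B \<subseteq> supp_on Q"
    using h by (auto simp: y_def supp_on_def unit_vec_def)
  then have Y_range: "Y c \<in> supp_on Q" for c
    using CVP.construct_in_span[OF B(1), of y c] CV.span_minimal[OF _ subspace_supp_on]
    unfolding Y_def by blast
  have Y_zero: "Y c = 0" if "c \<in> CV.span (B - X1)" for c
    using CVP.linear_eq_0_on_span[OF lin_Y _ that] Y_basis by (simp add: y_def)
  have Y_X1: "Y z = unit_vec (h z)" if "z \<in> X1" for z
    using Y_basis that B(2) by (auto simp: y_def)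
  show ?thesis by (rule that[OF lin_Y Y_range Y_zero Y_X1])
qed

lemma exists_complementing_map:
  fixes Phi :: "('v \<Rightarrow> complex) \<Rightarrow> nat \<Rightarrow> complex"
  assumes W: "finite W" and Phi: "Vector_Spaces.linear cscale cscale Phi"
    and Phi_range: "Phi ` supp_on W \<subseteq> cvec m"
    and R: "R \<subseteq> supp_on W" "finite R" "\<forall>c\<in>R. Phi c = 0"
    and Q: "finite Q" "card Q + m + card R \<le> card W"
  obtains Y where "Vector_Spaces.linear cscale cscale Y" "\<And>c. Y c \<in> supp_on Q"
    "\<And>c. c \<in> CV.span R \<Longrightarrow> Y c = 0"
    "Phi ` supp_on W \<subseteq> (\<lambda>c. Phi c + Y c) ` supp_on W"
    "supp_on Q \<subseteq> (\<lambda>c. Phi c + Y c) ` supp_on W"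
proof -
  obtain B X0 X1 h where B: "CV.independent B" "CV.span B = supp_on W"
    "X1 \<subseteq> B" "X0 \<subseteq> B - X1" "R \<subseteq> CV.span (B - X1)"
    "Phi ` supp_on W \<subseteq> CV.span (Phi ` X0)" and h: "bij_betw h X1 Q"
    using exists_adapted_basis[OF assms] .
  obtain Y where Y: "Vector_Spaces.linear cscale cscale Y" "\<And>c. Y c \<in> supp_on Q"
      "\<And>c. c \<in> CV.span (B - X1) \<Longrightarrow> Y c = 0" "\<And>z. z \<in> X1 \<Longrightarrow> Y z = unit_vec (h z)"
    using exists_linear_unit_vecs_on_basis_part[OF B(1,3) bij_betw_imp_surj_on[OF h, THEN equalityD1]]
    by blast
  have Y_R: "Y c = 0" if "c \<in> CV.span R" for c
    using Y(3) CV.span_minimal[OF B(5) CV.subspace_span] that by blast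
  define L where "L = (\<lambda>c. Phi c + Y c)"
  have L_image: "L ` supp_on W = CV.span (L ` B)"
    using CVP.linear_span_image[OF CVP.linear_compose_add[OF Phi Y(1)], of B]
    by (simp add: B(2) L_def)
  txt \<open>Since Y vanishes on X0, the vectors of X0 still span the image of Phi under L.\<close>
  have "Phi ` X0 = L ` X0"
  proof (rule image_cong[OF refl])
    fix z assume "z \<in> X0"
    then have "Y z = 0" using B(4) CV.span_base Y(3) by blast
    then show "Phi z = L z" by (simp add: L_def)
  qed
  then have "Phi ` supp_on W \<subseteq> CV.span (L ` X0)" using B(6) by simp
  also have "\<dots> \<subseteq> CV.span (L ` B)" using B(3,4) by (intro CV.span_mono image_mono) blast
  finally have Phi_L: "Phi ` supp_on W \<subseteq> L ` supp_on W" unfolding L_image .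
  have "unit_vec ` Q \<subseteq> L ` supp_on W"
  proof (rule image_subsetI)
    fix q assume "q \<in> Q"
    then obtain z where z: "z \<in> X1" "h z = q" using bij_betw_imp_surj_on[OF h] by blast
    then have zW: "z \<in> supp_on W" using B(2,3) CV.span_base by blast
    have "unit_vec q = L z - Phi z" using Y(4)[OF z(1)] z(2) by (simp add: L_def)
    moreover have "L z \<in> CV.span (L ` B)" using zW L_image by blast
    moreover have "Phi z \<in> CV.span (L ` B)" using zW Phi_L L_image by blast
    ultimately show "unit_vec q \<in> L ` supp_on W" unfolding L_image by (simp add: CV.span_diff)
  qed
  then have "supp_on Q \<subseteq> L ` supp_on W"
    unfolding span_unit_vec[OF Q(1), symmetric] L_image
    by (rule CV.span_minimal[OF _ CV.subspace_span])
  with Phi_L show ?thesis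
    using that[OF Y(1,2) Y_R] unfolding L_def by blast
qed

section \<open>TCD maps on BTB graphs\<close>

lemma btb_graph_finite_vertices: "btb_graph G \<Longrightarrow> finite (Wv G) \<and> finite (Bv G)"
  unfolding btb_graph_def by (elim conjE) blast

lemma btb_graph_black_degree:
  "btb_graph G \<Longrightarrow> b \<in> Bv G \<Longrightarrow> card {d \<in> darts G. vtx G d = b} = 3"
  unfolding btb_graph_def by (elim conjE) blast

lemma btb_graph_black_nbr_white:
  "btb_graph G \<Longrightarrow> d \<in> darts G \<Longrightarrow> vtx G d \<in> Bv G \<Longrightarrow> vtx G (alph G d) \<in> Wv G"
  unfolding btb_graph_def by (elim conjE) blast

lemma tcd_map_white: "tcd_map G n T \<Longrightarrow> w \<in> Wv G \<Longrightarrow> T w \<in> cvec (n + 1) \<and> T w \<noteq> 0"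
  unfolding tcd_map_def zero_fun_def by (elim conjE) blast

lemma tcd_map_black_not_proj_eq:
  "tcd_map G n T \<Longrightarrow> b \<in> Bv G \<Longrightarrow> d1 \<in> darts G \<Longrightarrow> d2 \<in> darts G \<Longrightarrow>
    vtx G d1 = b \<Longrightarrow> vtx G d2 = b \<Longrightarrow> d1 \<noteq> d2 \<Longrightarrow>
    \<not> proj_eq (T (vtx G (alph G d1))) (T (vtx G (alph G d2)))"
  unfolding tcd_map_def by (elim conjE) blast

lemma tcd_map_black_cdim: "tcd_map G n T \<Longrightarrow> b \<in> Bv G \<Longrightarrow> cdim (T ` nbrs G b) \<le> 2"
  unfolding tcd_map_def by (elim conjE) blast

lemma tcd_rank_eq_iff_cvec_subset_span:
  assumes "btb_graph G" "tcd_map G n T" "1 \<le> n"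
  shows "tcd_rank G T = n \<longleftrightarrow> cvec (n + 1) \<subseteq> CV.span (T ` Wv G)"
proof -
  have "finite (T ` Wv G)" using btb_graph_finite_vertices[OF assms(1)] by simp
  moreover have "T ` Wv G \<subseteq> cvec (n + 1)" using tcd_map_white[OF assms(2)] by blast
  moreover have "tcd_rank G T = n \<longleftrightarrow> cdim (T ` Wv G) = n + 1"
    using assms(3) unfolding tcd_rank_def by linarith
  ultimately show ?thesis using cdim_eq_iff_cvec_subset_span by blast
qed

lemma nbrs_black:
  assumes G: "btb_graph G" and T: "tcd_map G n T" and b: "b \<in> Bv G"
  shows "nbrs G b \<subseteq> Wv G" and "card (nbrs G b) = 3"
    and "\<forall>u\<in>nbrs G b. \<forall>v\<in>nbrs G b. u \<noteq> v \<longrightarrow> \<not> proj_eq (T u) (T v)"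
proof -
  define D where "D = {d \<in> darts G. vtx G d = b}"
  define nbr where "nbr d = vtx G (alph G d)" for d
  have nbrs: "nbrs G b = nbr ` D"
    unfolding nbrs_def D_def nbr_def by blast
  show "nbrs G b \<subseteq> Wv G"
    using btb_graph_black_nbr_white[OF G] b unfolding nbrs D_def nbr_def by auto
  have np: "\<not> proj_eq (T (nbr d1)) (T (nbr d2))" if "d1 \<in> D" "d2 \<in> D" "d1 \<noteq> d2" for d1 d2
    using tcd_map_black_not_proj_eq[OF T b] that unfolding D_def nbr_def by blast
  show "\<forall>u\<in>nbrs G b. \<forall>v\<in>nbrs G b. u \<noteq> v \<longrightarrow> \<not> proj_eq (T u) (T v)"
    unfolding nbrs using np by auto
  have "inj_on nbr D"
  proof (rule inj_onI)
    fix d1 d2 assume "d1 \<in> D" "d2 \<in> D" "nbr d1 = nbr d2"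
    then show "d1 = d2" using np proj_eq_refl by metis
  qed
  then show "card (nbrs G b) = 3"
    unfolding nbrs using btb_graph_black_degree[OF G b] by (simp add: card_image D_def)
qed

lemma black_relations_eq_span:
  assumes G: "btb_graph G" and T: "tcd_map G n T" and b: "b \<in> Bv G"
  obtains c where "\<forall>w\<in>nbrs G b. c w \<noteq> 0" "relations (nbrs G b) T = CV.span {c}"
proof (rule relations_three_eq_span)
  show "card (nbrs G b) = 3" by (rule nbrs_black(2)[OF assms])
  show "\<forall>w\<in>nbrs G b. T w \<noteq> 0"
    using nbrs_black(1)[OF assms] tcd_map_white[OF T] by blast
  show "\<forall>u\<in>nbrs G b. \<forall>v\<in>nbrs G b. u \<noteq> v \<longrightarrow> \<not> proj_eq (T u) (T v)"
    by (rule nbrs_black(3)[OF assms])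
  show "cdim (T ` nbrs G b) \<le> 2" by (rule tcd_map_black_cdim[OF T b])
qed (rule that)

lemma exists_black_relations_spanning:
  assumes G: "btb_graph G" and T: "tcd_map G n T"
  obtains R where "finite R" "card R \<le> card (Bv G)" "R \<subseteq> relations (Wv G) T"
    "\<And>b. b \<in> Bv G \<Longrightarrow> relations (nbrs G b) T \<subseteq> CV.span R"
proof -
  have "\<exists>c. relations (nbrs G b) T = CV.span {c}" if "b \<in> Bv G" for b
    using black_relations_eq_span[OF G T that] by blast
  then obtain rel where rel: "\<And>b. b \<in> Bv G \<Longrightarrow> relations (nbrs G b) T = CV.span {rel b}"
    by metis
  have fin: "finite (Wv G)" "finite (Bv G)" using btb_graph_finite_vertices[OF G] by auto
  show ?thesis
  proof (rule that[of "rel ` Bv G"])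
    show "finite (rel ` Bv G)" "card (rel ` Bv G) \<le> card (Bv G)"
      using fin(2) by (auto intro: card_image_le)
    show "rel ` Bv G \<subseteq> relations (Wv G) T"
      using rel CV.span_base relations_mono[OF fin(1) nbrs_black(1)[OF G T]] by blast
    show "relations (nbrs G b) T \<subseteq> CV.span (rel ` Bv G)" if "b \<in> Bv G" for b
      using rel[OF that] CV.span_mono[of "{rel b}" "rel ` Bv G"] that by blast
  qed
qed

section \<open>Lifting TCD maps\<close>

lemma exists_tcd_lift_map:
  assumes G: "btb_graph G" and T: "tcd_map G r T"
    and card: "d + 1 + card (Bv G) \<le> card (Wv G)" and "r \<le> d"
  obtains Y where "Vector_Spaces.linear cscale cscale Y" "\<And>c. Y c \<in> supp_on {r + 1..d}"
    "\<And>b c. b \<in> Bv G \<Longrightarrow> c \<in> relations (nbrs G b) T \<Longrightarrow> Y c = 0"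
    "lincomb (Wv G) T ` supp_on (Wv G) \<subseteq> (\<lambda>c. lincomb (Wv G) T c + Y c) ` supp_on (Wv G)"
    "supp_on {r + 1..d} \<subseteq> (\<lambda>c. lincomb (Wv G) T c + Y c) ` supp_on (Wv G)"
proof -
  let ?W = "Wv G"
  have W: "finite ?W" using btb_graph_finite_vertices[OF G] by auto
  obtain R where R: "finite R" "card R \<le> card (Bv G)" "R \<subseteq> relations ?W T"
    "\<And>b. b \<in> Bv G \<Longrightarrow> relations (nbrs G b) T \<subseteq> CV.span R"
    using exists_black_relations_spanning[OF G T] by blast
  have "T ` ?W \<subseteq> cvec (r + 1)" using tcd_map_white[OF T] by blast
  then have "CV.span (T ` ?W) \<subseteq> cvec (r + 1)"
    unfolding cvec_eq_supp_on by (rule CV.span_minimal[OF _ subspace_supp_on])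
  then have Phi_range: "lincomb ?W T ` supp_on ?W \<subseteq> cvec (r + 1)"
    by (simp add: span_image_eq_lincomb[OF W])
  have R_supp: "R \<subseteq> supp_on ?W" and R_Phi: "\<forall>c\<in>R. lincomb ?W T c = 0"
    using R(3) by (auto simp: relations_def)
  have dim: "card {r + 1..d} + (r + 1) + card R \<le> card ?W" using card R(2) \<open>r \<le> d\<close> by simp
  obtain Y where Y: "Vector_Spaces.linear cscale cscale Y" "\<And>c. Y c \<in> supp_on {r + 1..d}"
      "\<And>c. c \<in> CV.span R \<Longrightarrow> Y c = 0"
      "lincomb ?W T ` supp_on ?W \<subseteq> (\<lambda>c. lincomb ?W T c + Y c) ` supp_on ?W"
      "supp_on {r + 1..d} \<subseteq> (\<lambda>c. lincomb ?W T c + Y c) ` supp_on ?W"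
    using exists_complementing_map[OF W linear_lincomb Phi_range R_supp R(1) R_Phi
        finite_atLeastAtMost dim] by blast
  show ?thesis using that[OF Y(1,2) _ Y(4,5)] Y(3) R(4) by blast
qed

lemma exists_tcd_lift:
  assumes G: "btb_graph G" and T: "tcd_map G r T"
    and rank: "cvec (r + 1) \<subseteq> CV.span (T ` Wv G)"
    and card: "d + 1 + card (Bv G) \<le> card (Wv G)" and "r \<le> d"
  obtains That where "\<And>w. w \<in> Wv G \<Longrightarrow> That w \<in> cvec (d + 1)"
    "\<And>w. w \<in> Wv G \<Longrightarrow> trunc (r + 1) (That w) = T w"
    "\<And>b. b \<in> Bv G \<Longrightarrow> relations (nbrs G b) T \<subseteq> relations (nbrs G b) That"
    "cvec (d + 1) \<subseteq> CV.span (That ` Wv G)"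
proof -
  let ?W = "Wv G"
  have W: "finite ?W" using btb_graph_finite_vertices[OF G] by auto
  obtain Y where Y: "Vector_Spaces.linear cscale cscale Y" "\<And>c. Y c \<in> supp_on {r + 1..d}"
      "\<And>b c. b \<in> Bv G \<Longrightarrow> c \<in> relations (nbrs G b) T \<Longrightarrow> Y c = 0"
      "lincomb ?W T ` supp_on ?W \<subseteq> (\<lambda>c. lincomb ?W T c + Y c) ` supp_on ?W"
      "supp_on {r + 1..d} \<subseteq> (\<lambda>c. lincomb ?W T c + Y c) ` supp_on ?W"
    using exists_tcd_lift_map[OF G T card \<open>r \<le> d\<close>] by blast
  define That where "That w = T w + Y (unit_vec w)" for w
  have lincomb_That: "lincomb ?W That c = lincomb ?W T c + Y c" if "c \<in> supp_on ?W" for c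
    unfolding That_def by (rule lincomb_add_linear_unit_vec[OF W Y(1) that])
  show ?thesis
  proof (rule that)
    fix w assume w: "w \<in> ?W"
    show "That w \<in> cvec (d + 1)"
      using tcd_map_white[OF T w] Y(2)[of "unit_vec w"] \<open>r \<le> d\<close>
      by (auto simp: That_def cvec_def supp_on_def)
    show "trunc (r + 1) (That w) = T w"
      using tcd_map_white[OF T w] Y(2)[of "unit_vec w"]
      by (simp add: That_def trunc_add trunc_cvec trunc_supp_on_ge)
  next
    fix b assume b: "b \<in> Bv G"
    note nbrs_W = nbrs_black(1)[OF G T b]
    show "relations (nbrs G b) T \<subseteq> relations (nbrs G b) That"
    proof
      fix c assume c: "c \<in> relations (nbrs G b) T"
      then have supp: "c \<in> supp_on (nbrs G b)" by (simp add: relations_def)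
      have "c \<in> relations ?W T" using c relations_mono[OF W nbrs_W] by blast
      then have "lincomb ?W That c = 0"
        using Y(3)[OF b c] lincomb_That by (simp add: relations_def)
      then show "c \<in> relations (nbrs G b) That"
        using supp lincomb_supp_subset[OF W nbrs_W supp, of That] by (simp add: relations_def)
    qed
  next
    have span_That: "CV.span (That ` ?W) = (\<lambda>c. lincomb ?W T c + Y c) ` supp_on ?W"
      using lincomb_That by (simp add: span_image_eq_lincomb[OF W])
    have "cvec (r + 1) \<subseteq> CV.span (That ` ?W)"
      using rank Y(4) span_That by (simp add: span_image_eq_lincomb[OF W])
    then show "cvec (d + 1) \<subseteq> CV.span (That ` ?W)"
      using Y(5) span_That by (intro cvec_subset_subspace CV.subspace_span) auto
  qed
qed

context
  fixes G :: "('v, 'd) btb" and r d :: nat and T That :: "'v \<Rightarrow> nat \<Rightarrow> complex"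
  assumes G: "btb_graph G" and T: "tcd_map G r T"
    and That_cvec: "\<And>w. w \<in> Wv G \<Longrightarrow> That w \<in> cvec (d + 1)"
    and trunc_That: "\<And>w. w \<in> Wv G \<Longrightarrow> trunc (r + 1) (That w) = T w"
    and relations_That: "\<And>b. b \<in> Bv G \<Longrightarrow> relations (nbrs G b) T \<subseteq> relations (nbrs G b) That"
begin

lemma tcd_map_lift: "tcd_map G d That"
  unfolding tcd_map_def
proof (intro conjI ballI allI impI)
  fix w assume w: "w \<in> Wv G"
  show "That w \<in> cvec (d + 1)" using That_cvec[OF w] .
  show "That w \<noteq> (\<lambda>i. 0)"
  proof
    assume "That w = (\<lambda>i. 0)"
    then have "T w = 0" using trunc_That[OF w] by (simp add: trunc_def zero_fun_def)
    then show False using tcd_map_white[OF T w] by simp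
  qed
next
  fix b d1 d2
  assume b: "b \<in> Bv G"
    and d: "d1 \<in> darts G" "d2 \<in> darts G" "vtx G d1 = b" "vtx G d2 = b" "d1 \<noteq> d2"
  have W: "vtx G (alph G d1) \<in> Wv G" "vtx G (alph G d2) \<in> Wv G"
    using btb_graph_black_nbr_white[OF G] b d by auto
  show "\<not> proj_eq (That (vtx G (alph G d1))) (That (vtx G (alph G d2)))"
    using proj_eq_trunc[of _ _ "r + 1"] trunc_That[OF W(1)] trunc_That[OF W(2)]
      tcd_map_black_not_proj_eq[OF T b d] by metis
next
  fix b assume b: "b \<in> Bv G"
  obtain c where c: "\<forall>w\<in>nbrs G b. c w \<noteq> 0" "relations (nbrs G b) T = CV.span {c}"
    using black_relations_eq_span[OF G T b] .
  then have rel: "c \<in> relations (nbrs G b) That"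
    using relations_That[OF b] CV.span_base by blast
  have card: "card (nbrs G b) = 3" using nbrs_black(2)[OF G T b] .
  then have fin: "finite (nbrs G b)" by (intro card_ge_0_finite) simp
  then obtain w where w: "w \<in> nbrs G b" using card by fastforce
  have "cdim (That ` nbrs G b) \<le> card (nbrs G b) - 1"
    using c(1) w by (intro cdim_le_card_if_relation[OF fin w rel]) blast
  then show "cdim (That ` nbrs G b) \<le> 2" using card by simp
qed

lemma lift_span_trunc_eq_zero:
  assumes b: "b \<in> Bv G" and x: "x \<in> CV.span (That ` nbrs G b)" "trunc (r + 1) x = 0"
  shows "x = 0"
proof -
  have "finite (nbrs G b)" using nbrs_black(2)[OF G T b] by (intro card_ge_0_finite) simp
  then obtain c where c: "c \<in> supp_on (nbrs G b)" "x = lincomb (nbrs G b) That c"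
    using x(1) span_image_eq_lincomb by blast
  have "lincomb (nbrs G b) T c = lincomb (nbrs G b) (\<lambda>w. trunc (r + 1) (That w)) c"
    using nbrs_black(1)[OF G T b] trunc_That by (intro lincomb_cong) auto
  also have "\<dots> = 0" using x(2) c(2) by (simp add: trunc_lincomb)
  finally have "c \<in> relations (nbrs G b) That"
    using c(1) relations_That[OF b] by (auto simp: relations_def)
  then show "x = 0" using c(2) by (simp add: relations_def)
qed

lemma admissible_lift: "admissible G That (supp_on {r + 1..d})"
  unfolding admissible_def
proof (intro conjI ballI)
  fix w assume w: "w \<in> Wv G"
  show "That w \<notin> supp_on {r + 1..d}"
  proof
    assume "That w \<in> supp_on {r + 1..d}"
    then have "T w = 0" using trunc_That[OF w] trunc_supp_on_ge by metis
    then show False using tcd_map_white[OF T w] by simp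
  qed
next
  fix b assume b: "b \<in> Bv G"
  have "x = 0" if "x \<in> supp_on {r + 1..d}" "x \<in> cspan (That ` nbrs G b)" for x
    using lift_span_trunc_eq_zero[OF b] trunc_supp_on_ge that by (simp add: cspan_eq_span)
  moreover have "0 \<in> supp_on {r + 1..d} \<inter> cspan (That ` nbrs G b)"
    by (simp add: cspan_eq_span CV.span_zero supp_on_def)
  ultimately show "supp_on {r + 1..d} \<inter> cspan (That ` nbrs G b) = {\<lambda>i. 0}"
    unfolding zero_fun_def[symmetric] by blast
qed

lemma in_span_supp_on_insert_lift:
  assumes "w \<in> Wv G"
  shows "T w \<in> CV.span (supp_on {r + 1..d} \<union> {That w})"
proof -
  have "That w - T w \<in> supp_on {r + 1..d}"
    using diff_trunc_in_supp_on[OF That_cvec[OF assms]] trunc_That[OF assms] by metis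
  then have "That w - (That w - T w) \<in> CV.span (supp_on {r + 1..d} \<union> {That w})"
    by (intro CV.span_diff CV.span_base) auto
  then show ?thesis by simp
qed

end

theorem proposition4p9:
  fixes G :: "('v, 'd) btb" and T :: "'v \<Rightarrow> nat \<Rightarrow> complex" and r d :: nat
  assumes "btb_graph G" and "minimal_btb G"
    and "1 \<le> r" and "r < d" and "int d \<le> int (card (Wv G)) - int (card (Bv G)) - 1"
    and "tcd_map G r T" and "tcd_rank G T = r"
  shows "\<exists>That U V \<phi>.
           tcd_map G d That \<and> tcd_rank G That = d \<and>
           csubspace (d + 1) (d - r) U \<and> admissible G That U \<and>
           csubspace (d + 1) (r + 1) V \<and> U \<inter> V = {\<lambda>i. 0} \<and>
           clinear_on V \<phi> \<and> bij_betw \<phi> V (cvec (r + 1)) \<and>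
           (\<forall>w\<in>Wv G. \<exists>v. v \<in> V \<inter> cspan (U \<union> {That w}) \<and> v \<noteq> (\<lambda>i. 0) \<and>
                          proj_eq (T w) (\<phi> v))"
proof -
  note G = assms(1) and T = assms(6)
  have rank: "cvec (r + 1) \<subseteq> CV.span (T ` Wv G)"
    using tcd_rank_eq_iff_cvec_subset_span[OF G T assms(3)] assms(7) by blast
  have card: "d + 1 + card (Bv G) \<le> card (Wv G)" using assms(5) by linarith
  obtain That where That: "\<And>w. w \<in> Wv G \<Longrightarrow> That w \<in> cvec (d + 1)"
      "\<And>w. w \<in> Wv G \<Longrightarrow> trunc (r + 1) (That w) = T w"
      "\<And>b. b \<in> Bv G \<Longrightarrow> relations (nbrs G b) T \<subseteq> relations (nbrs G b) That"
      "cvec (d + 1) \<subseteq> CV.span (That ` Wv G)"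
    using exists_tcd_lift[OF G T rank card] assms(4) by auto
  have tcd_That: "tcd_map G d That" by (rule tcd_map_lift[OF G T That(1-3)])
  have U_index: "{r + 1..d} \<subseteq> {..<d + 1}" "{r + 1..d} \<inter> {..<r + 1} = {}" by auto
  have "tcd_rank G That = d"
    using tcd_rank_eq_iff_cvec_subset_span[OF G tcd_That] That(4) assms(3,4) by simp
  moreover have "csubspace (d + 1) (d - r) (supp_on {r + 1..d})"
    using csubspace_supp_on[OF U_index(1)] by simp
  moreover have "csubspace (d + 1) (r + 1) (cvec (r + 1))"
    using csubspace_supp_on[of "{..<r + 1}" "d + 1"] assms(4) by (simp add: cvec_eq_supp_on)
  moreover have "supp_on {r + 1..d} \<inter> cvec (r + 1) = {\<lambda>i. 0}"
    unfolding cvec_eq_supp_on supp_on_Int U_index(2) supp_on_empty by (simp add: zero_fun_def)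
  moreover have "T w \<in> cvec (r + 1) \<inter> cspan (supp_on {r + 1..d} \<union> {That w}) \<and>
      T w \<noteq> (\<lambda>i. 0) \<and> proj_eq (T w) (id (T w))" if "w \<in> Wv G" for w
    using tcd_map_white[OF T that] in_span_supp_on_insert_lift[OF G T That(1-3) that]
    by (simp add: cspan_eq_span proj_eq_refl zero_fun_def)
  ultimately show ?thesis
    using tcd_That admissible_lift[OF G T That(1-3)] bij_betw_id
    by (intro exI[of _ That] exI[of _ "supp_on {r + 1..d}"] exI[of _ "cvec (r + 1)"] exI[of _ id])
      (auto simp: clinear_on_def)
qed

end
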